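(* Let $\mathcal{C}=\{C_h\}$ be a channel over $\Sigma$, $h\in\Sigma^*$, $\lambda\ge1$ and $m=m_1\cdots m_\lambda\in\{0,1\}^\lambda$. If $f$ is drawn uniformly at random from the set of all Boolean functions on $\{1,\dots,\lambda\}\times\Sigma$, then $P^f_h(m)$ has exactly the same distribution as $c_1c_2\cdots c_\lambda$ where, successively, $c_i\sim C_{h\circ c_1\circ\cdots\circ c_{i-1}}$ independently.
   Context: $\Sigma$ is a finite alphabet; a channel is a family $\mathcal{C}=\{C_h\}_{h\in\Sigma^*}$ of probability distributions on $\Sigma$; $\circ$ denotes concatenation. For $g:\Sigma\to\{0,1\}$, $h\in\Sigma^*$, $b\in\{0,1\}$, the procedure $\mathtt{rejsam}^g_h(b)$ draws $c_1\sim C_h$; if $g(c_1)=b$ it outputs $c_1$; otherwise it draws $c_2\sim C_h$ independently and outputs $c_2$. For $f:\{1,\dots,\lambda\}\times\Sigma\to\{0,1\}$ write $f_i(\sigma)=f(i,\sigma)$. The procedure $P^f_h:\{0,1\}^\lambda\to\Sigma^\lambda$ on input $m=m_1\cdots m_\lambda$ does: for $i=1,\dots,\lambda$, set $c_i=\mathtt{rejsam}^{f_i}_h(m_i)$ and update $h\leftarrow h\circ c_i$; output $c_1\cdots c_\lambda$. *)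

theory Defs
  imports "HOL-Probability.Probability_Mass_Function"
begin

text \<open>Alphabet \<Sigma> is a finite type 'a; strings in \<Sigma>^* are lists; a channel is
  a map C from histories h to distributions C h on \<Sigma>; concatenation h \<circ> c is h @ [c].\<close>

definition rejsam :: "('a \<Rightarrow> bool) \<Rightarrow> 'a pmf \<Rightarrow> bool \<Rightarrow> 'a pmf" where
  "rejsam g D b = bind_pmf D (\<lambda>c1. if g c1 = b then return_pmf c1 else D)"

text \<open>P^f_h, processing message bits starting at index i; f is a function on
  index-symbol pairs, f_i(\<sigma>) = f (i, \<sigma>).\<close>
fun Pf :: "(nat \<times> 'a \<Rightarrow> bool) \<Rightarrow> ('a list \<Rightarrow> 'a pmf) \<Rightarrow> 'a list \<Rightarrow> nat \<Rightarrow> bool list \<Rightarrow> 'a list pmf" where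
  "Pf f C h i [] = return_pmf []"
| "Pf f C h i (b # bs) =
     bind_pmf (rejsam (\<lambda>\<sigma>. f (i, \<sigma>)) (C h) b)
       (\<lambda>c. bind_pmf (Pf f C (h @ [c]) (Suc i) bs) (\<lambda>cs. return_pmf (c # cs)))"

fun channel_sample :: "('a list \<Rightarrow> 'a pmf) \<Rightarrow> 'a list \<Rightarrow> nat \<Rightarrow> 'a list pmf" where
  "channel_sample C h 0 = return_pmf []"
| "channel_sample C h (Suc n) =
     bind_pmf (C h) (\<lambda>c. bind_pmf (channel_sample C (h @ [c]) n) (\<lambda>cs. return_pmf (c # cs)))"

text \<open>All Boolean functions on {1..\<lambda>} \<times> \<Sigma>, represented extensionally (False outside).\<close>
definition bool_funs :: "nat \<Rightarrow> (nat \<times> 'a \<Rightarrow> bool) set" where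
  "bool_funs lam = {f. \<forall>x. x \<notin> {1..lam} \<times> UNIV \<longrightarrow> f x = False}"

end

theory Submission
  imports Defs
begin

text \<open>
  A uniformly random Boolean function on the index set
  {i, ..., i + n - 1} \<times> \<Sigma> decomposes into independent uniform layers
  f_i, f_(i+1), ..., and step i of the encoder only reads layer f_i.
  Averaged over a uniform g : \<Sigma> \<Rightarrow> bool, rejection sampling from D
  outputs exactly D: the contributions of g and of its complement add up to
  twice the probability under D.  Hence one may integrate out the first layer,
  after which the first output symbol is distributed as C_h, and the
  remaining steps are handled by induction on the message, generalised over
  the history and the starting index.
\<close>

lemma rejsam_plus_rejsam_complement:
  fixes D :: "'a::finite pmf"
  shows "pmf (rejsam g D b) c + pmf (rejsam (\<lambda>x. \<not> g x) D b) c = 2 * pmf D c"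
proof -
  have int: "\<And>f::'a \<Rightarrow> real. integrable (measure_pmf D) f"
    by (rule integrable_measure_pmf_finite) simp
  have "pmf (rejsam g D b) c + pmf (rejsam (\<lambda>x. \<not> g x) D b) c
      = (\<integral>x. pmf (if g x = b then return_pmf x else D) c
             + pmf (if (\<not> g x) = b then return_pmf x else D) c \<partial>measure_pmf D)"
    unfolding rejsam_def pmf_bind by (rule Bochner_Integration.integral_add[symmetric]; rule int)
  also have "\<dots> = (\<integral>x. indicator {c} x + pmf D c \<partial>measure_pmf D)"
    \<comment> \<open>for each first draw x exactly one of the two runs accepts it\<close>
    by (rule Bochner_Integration.integral_cong) (auto simp: pmf_return indicator_def)
  also have "\<dots> = 2 * pmf D c"
    by (simp add: int measure_pmf_single)
  finally show ?thesis .
qed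

lemma rejsam_uniform_predicate:
  fixes D :: "'a::finite pmf"
  shows "bind_pmf (pmf_of_set UNIV) (\<lambda>g. rejsam g D b) = D"
proof (rule pmf_eqI)
  fix c
  let ?F = "\<lambda>g. pmf (rejsam g D b) c"
  let ?U = "UNIV :: ('a \<Rightarrow> bool) set"
  have complement: "sum ?F ?U = sum (\<lambda>g. ?F (\<lambda>x. \<not> g x)) ?U"
    by (rule sum.reindex_bij_witness[where i="\<lambda>g x. \<not> g x" and j="\<lambda>g x. \<not> g x"]) auto
  have "2 * sum ?F ?U = sum (\<lambda>g. ?F g + ?F (\<lambda>x. \<not> g x)) ?U"
    by (simp add: sum.distrib complement[symmetric])
  also have "\<dots> = card ?U * (2 * pmf D c)"
    by (simp add: rejsam_plus_rejsam_complement)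
  finally show "pmf (bind_pmf (pmf_of_set UNIV) (\<lambda>g. rejsam g D b)) c = pmf D c"
    unfolding pmf_bind by (simp add: integral_pmf_of_set)
qed

definition funs_on :: "nat set \<Rightarrow> (nat \<times> 'a \<Rightarrow> bool) set" where
  "funs_on I = {f. \<forall>x. fst x \<notin> I \<longrightarrow> f x = False}"

lemma funs_on_finite:
  assumes "finite I"
  shows "finite (funs_on I :: (nat \<times> 'a::finite \<Rightarrow> bool) set)"
proof -
  have "funs_on I = (\<lambda>S x. x \<in> S) ` Pow (I \<times> (UNIV :: 'a set))"
    unfolding funs_on_def by (auto intro!: image_eqI[where x="Collect _"])
  then show ?thesis using assms by simp
qed

lemma funs_on_nonempty: "funs_on I \<noteq> {}"
  unfolding funs_on_def by auto

lemma pair_pmf_of_set: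
  assumes "finite A" "A \<noteq> {}" "finite B" "B \<noteq> {}"
  shows "pair_pmf (pmf_of_set A) (pmf_of_set B) = pmf_of_set (A \<times> B)"
proof (rule pmf_eqI)
  fix x :: "'a \<times> 'b"
  have "A \<times> B \<noteq> {}" "finite (A \<times> B)" using assms by auto
  then show "pmf (pair_pmf (pmf_of_set A) (pmf_of_set B)) x = pmf (pmf_of_set (A \<times> B)) x"
    using assms by (cases x) (simp add: pmf_pair card_cartesian_product indicator_def)
qed

definition set_layer :: "nat \<Rightarrow> ('a \<Rightarrow> bool) \<Rightarrow> (nat \<times> 'a \<Rightarrow> bool) \<Rightarrow> nat \<times> 'a \<Rightarrow> bool" where
  "set_layer i g f = (\<lambda>(n, a). if n = i then g a else f (n, a))"

definition split_layer :: "nat \<Rightarrow> (nat \<times> 'a \<Rightarrow> bool) \<Rightarrow> ('a \<Rightarrow> bool) \<times> (nat \<times> 'a \<Rightarrow> bool)" where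
  "split_layer i f = (\<lambda>a. f (i, a), \<lambda>x. fst x \<noteq> i \<and> f x)"

lemma bij_betw_set_layer:
  fixes J :: "nat set" and i :: nat
  assumes "i \<notin> J"
  shows "bij_betw (case_prod (set_layer i)) (UNIV \<times> funs_on J)
           (funs_on (insert i J) :: (nat \<times> 'a \<Rightarrow> bool) set)"
proof (rule bij_betw_byWitness[where f'="split_layer i"])
  show "\<forall>p\<in>UNIV \<times> (funs_on J :: (nat \<times> 'a \<Rightarrow> bool) set). split_layer i (case_prod (set_layer i) p) = p"
    using assms by (fastforce simp: split_layer_def set_layer_def funs_on_def)
  show "\<forall>f\<in>funs_on (insert i J) :: (nat \<times> 'a \<Rightarrow> bool) set. case_prod (set_layer i) (split_layer i f) = f"
    by (auto simp: set_layer_def split_layer_def)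
qed (auto simp: set_layer_def split_layer_def funs_on_def)

lemma pmf_of_set_funs_on_insert:
  assumes "i \<notin> J" "finite J"
  shows "pmf_of_set (funs_on (insert i J) :: (nat \<times> 'a::finite \<Rightarrow> bool) set)
       = bind_pmf (pmf_of_set UNIV) (\<lambda>g. bind_pmf (pmf_of_set (funs_on J))
           (\<lambda>f. return_pmf (set_layer i g f)))"
proof -
  have fin: "finite (funs_on J :: (nat \<times> 'a \<Rightarrow> bool) set)"
    using assms(2) by (rule funs_on_finite)
  have bij: "bij_betw (case_prod (set_layer i)) (UNIV \<times> funs_on J)
               (funs_on (insert i J) :: (nat \<times> 'a \<Rightarrow> bool) set)"
    using assms(1) by (rule bij_betw_set_layer)
  have "pmf_of_set (funs_on (insert i J) :: (nat \<times> 'a \<Rightarrow> bool) set)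
      = pmf_of_set (case_prod (set_layer i) ` (UNIV \<times> funs_on J))"
    using bij by (simp add: bij_betw_imp_surj_on)
  also have "\<dots> = map_pmf (case_prod (set_layer i)) (pmf_of_set (UNIV \<times> funs_on J))"
    using bij_betw_imp_inj_on[OF bij] fin funs_on_nonempty[of J]
    by (intro map_pmf_of_set_inj[symmetric]) simp_all
  also have "\<dots> = map_pmf (case_prod (set_layer i))
                    (pair_pmf (pmf_of_set UNIV) (pmf_of_set (funs_on J)))"
    by (subst pair_pmf_of_set) (simp_all add: fin funs_on_nonempty)
  also have "\<dots> = bind_pmf (pmf_of_set UNIV) (\<lambda>g. bind_pmf (pmf_of_set (funs_on J))
           (\<lambda>f. return_pmf (set_layer i g f)))"
    unfolding map_pmf_def pair_pmf_def by (simp add: bind_assoc_pmf bind_return_pmf)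
  finally show ?thesis .
qed

lemma Pf_local:
  assumes "\<And>n a. n \<ge> j \<Longrightarrow> f (n, a) = f' (n, a)"
  shows "Pf f C h j bs = Pf f' C h j bs"
  using assms
proof (induction bs arbitrary: h j)
  case Nil then show ?case by simp
next
  case (Cons b bs)
  have "(\<lambda>\<sigma>. f (j, \<sigma>)) = (\<lambda>\<sigma>. f' (j, \<sigma>))" using Cons.prems by auto
  moreover have "\<And>c. Pf f C (h @ [c]) (Suc j) bs = Pf f' C (h @ [c]) (Suc j) bs"
    by (rule Cons.IH) (use Cons.prems in auto)
  ultimately show ?case by simp
qed

lemma Pf_set_layer:
  "Pf (set_layer i g f) C h i (b # bs) =
     bind_pmf (rejsam g (C h) b)
       (\<lambda>c. bind_pmf (Pf f C (h @ [c]) (Suc i) bs) (\<lambda>cs. return_pmf (c # cs)))"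
proof -
  have "(\<lambda>\<sigma>. set_layer i g f (i, \<sigma>)) = g" by (simp add: set_layer_def)
  moreover have "\<And>c. Pf (set_layer i g f) C (h @ [c]) (Suc i) bs = Pf f C (h @ [c]) (Suc i) bs"
    by (rule Pf_local) (simp add: set_layer_def)
  ultimately show ?thesis by simp
qed

lemma Pf_uniform_eq_channel_sample:
  fixes C :: "('a::finite) list \<Rightarrow> 'a pmf"
  shows "bind_pmf (pmf_of_set (funs_on {i..<i + length bs})) (\<lambda>f. Pf f C h i bs)
         = channel_sample C h (length bs)"
proof (induction bs arbitrary: h i)
  case Nil
  then show ?case using funs_on_finite[of "{}"] funs_on_nonempty by simp
next
  case (Cons b bs)
  let ?J = "{Suc i..<Suc i + length bs}"
  let ?rest = "\<lambda>c cs. return_pmf (c # cs)"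
  have layers: "{i..<i + length (b # bs)} = insert i ?J" by auto
  have "bind_pmf (pmf_of_set (funs_on {i..<i + length (b # bs)})) (\<lambda>f. Pf f C h i (b # bs))
      = bind_pmf (pmf_of_set UNIV) (\<lambda>g. bind_pmf (pmf_of_set (funs_on ?J)) (\<lambda>f.
          bind_pmf (rejsam g (C h) b) (\<lambda>c. bind_pmf (Pf f C (h @ [c]) (Suc i) bs) (?rest c))))"
    unfolding layers
    by (simp add: pmf_of_set_funs_on_insert bind_assoc_pmf bind_return_pmf Pf_set_layer
             del: Pf.simps)
  also have "\<dots> = bind_pmf (pmf_of_set UNIV) (\<lambda>g. bind_pmf (rejsam g (C h) b) (\<lambda>c.
          bind_pmf (pmf_of_set (funs_on ?J)) (\<lambda>f. bind_pmf (Pf f C (h @ [c]) (Suc i) bs) (?rest c))))"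
    \<comment> \<open>the remaining layers are independent of the first output symbol\<close>
    by (subst bind_commute_pmf) (rule refl)
  also have "\<dots> = bind_pmf (pmf_of_set UNIV) (\<lambda>g. bind_pmf (rejsam g (C h) b) (\<lambda>c.
          bind_pmf (channel_sample C (h @ [c]) (length bs)) (?rest c)))"
    by (simp add: bind_assoc_pmf[symmetric] Cons.IH[of "Suc i", simplified])
  also have "\<dots> = bind_pmf (C h) (\<lambda>c. bind_pmf (channel_sample C (h @ [c]) (length bs)) (?rest c))"
    by (simp add: bind_assoc_pmf[symmetric] rejsam_uniform_predicate)
  also have "\<dots> = channel_sample C h (length (b # bs))" by simp
  finally show ?case .
qed

theorem mainTheorem5:
  fixes C :: "('a::finite) list \<Rightarrow> 'a pmf" and h :: "'a list"
    and lam :: nat and m :: "bool list"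
  assumes "lam \<ge> 1" and "length m = lam"
  shows "bind_pmf (pmf_of_set (bool_funs lam)) (\<lambda>f. Pf f C h 1 m) = channel_sample C h lam"
proof -
  have "bool_funs lam = (funs_on {1..<1 + length m} :: (nat \<times> 'a \<Rightarrow> bool) set)"
    using assms(2) by (auto simp: bool_funs_def funs_on_def)
  then show ?thesis
    using Pf_uniform_eq_channel_sample[of 1 m C h] assms(2) by simp
qed

end
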